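(* Let $\varphi\colon G\to G$ and $\psi\colon H\to H$ be endomorphisms of abelian groups and let $\varphi\oplus\psi\colon G\oplus H\to G\oplus H$ be given by $(\varphi\oplus\psi)(g,h)=(\varphi g,\psi h)$. Then $\varphi\oplus\psi$ is positively expansive if and only if both $\varphi$ and $\psi$ are positively expansive. Analogously, if $\varphi$ and $\psi$ are automorphisms, then $\varphi\oplus\psi$ is expansive if and only if both $\varphi$ and $\psi$ are expansive.
   Context: $\mathbb N=\{0,1,2,\dots\}$. An endomorphism $\varphi$ of an abelian group $G$ is positively expansive if there is a finite subgroup $S\leq G$ such that for every finite subgroup $F\leq G$ there is $n\in\mathbb N$ with $F\subseteq\sum_{k=0}^n\varphi^kS$. An automorphism $\varphi$ is expansive if there is a finite subgroup $S\leq G$ such that for every finite subgroup $F\leq G$ there is $n\in\mathbb N$ with $F\subseteq\sum_{|k|\leq n}\varphi^kS$. *)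

theory Defs
  imports Main "HOL-Library.Product_Plus"
begin

text \<open>Abelian groups are modelled as types of class ab_group_add; the direct sum
G \<oplus> H is the product type with componentwise addition.\<close>

definition endomorphism :: "('a::ab_group_add \<Rightarrow> 'a) \<Rightarrow> bool" where
  "endomorphism f \<longleftrightarrow> (\<forall>x y. f (x + y) = f x + f y)"

definition automorphism :: "('a::ab_group_add \<Rightarrow> 'a) \<Rightarrow> bool" where
  "automorphism f \<longleftrightarrow> endomorphism f \<and> bij f"

definition finite_subgroup :: "'a::ab_group_add set \<Rightarrow> bool" where
  "finite_subgroup S \<longleftrightarrow> finite S \<and> 0 \<in> S \<and> (\<forall>x\<in>S. \<forall>y\<in>S. x + y \<in> S) \<and> (\<forall>x\<in>S. - x \<in> S)"

definition set_sum :: "('i \<Rightarrow> 'a::ab_group_add set) \<Rightarrow> 'i set \<Rightarrow> 'a set" where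
  "set_sum A I = {(\<Sum>k\<in>I. f k) | f. \<forall>k\<in>I. f k \<in> A k}"

definition zpow :: "('a \<Rightarrow> 'a) \<Rightarrow> int \<Rightarrow> 'a \<Rightarrow> 'a" where
  "zpow f k = (if 0 \<le> k then f ^^ nat k else (inv f) ^^ nat (- k))"

definition pos_expansive :: "('a::ab_group_add \<Rightarrow> 'a) \<Rightarrow> bool" where
  "pos_expansive f \<longleftrightarrow> (\<exists>S. finite_subgroup S \<and>
     (\<forall>F. finite_subgroup F \<longrightarrow> (\<exists>n::nat. F \<subseteq> set_sum (\<lambda>k. (f ^^ k) ` S) {0..n})))"

definition expansive :: "('a::ab_group_add \<Rightarrow> 'a) \<Rightarrow> bool" where
  "expansive f \<longleftrightarrow> (\<exists>S. finite_subgroup S \<and>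
     (\<forall>F. finite_subgroup F \<longrightarrow> (\<exists>n::nat. F \<subseteq> set_sum (\<lambda>k. zpow f k ` S) {- int n..int n})))"

end

theory Submission
  imports Defs "HOL.Modules"
begin

text \<open>Both notions are instances of one condition on a family of maps P k indexed by an
  increasing sequence of finite index sets I n, and this condition splits along direct sums:
  a witness S for \<phi> \<oplus> \<psi> projects to witnesses for \<phi> and \<psi> (test it against F \<times> 0 and
  0 \<times> F), while witnesses S1, S2 for \<phi>, \<psi> give the witness S1 \<times> S2 for \<phi> \<oplus> \<psi>, since
  every finite subgroup F of G \<oplus> H lies in the product of its two projections.\<close>

lemma additive_fst: "additive fst"
  by (simp add: additive_def)

lemma additive_snd: "additive snd"
  by (simp add: additive_def)

lemma additive_Pair_left: "additive (\<lambda>x. (x, 0))"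
  by (simp add: additive_def)

lemma additive_Pair_right: "additive (\<lambda>y. (0, y))"
  by (simp add: additive_def)

lemma finite_subgroup_image:
  assumes "additive h" and "finite_subgroup S"
  shows "finite_subgroup (h ` S)"
  using assms unfolding finite_subgroup_def
  by (auto simp: additive.add [symmetric] additive.minus [symmetric])
    (metis additive.zero image_eqI)

lemma finite_subgroup_Times:
  assumes "finite_subgroup A" and "finite_subgroup B"
  shows "finite_subgroup (A \<times> B)"
  using assms unfolding finite_subgroup_def by (auto simp: zero_prod_def)

lemma image_set_sum_subset:
  assumes "additive h"
  shows "h ` set_sum A I \<subseteq> set_sum (\<lambda>k. h ` A k) I"
proof
  fix y assume "y \<in> h ` set_sum A I"
  then obtain f where y: "y = h (\<Sum>k\<in>I. f k)" and f: "\<forall>k\<in>I. f k \<in> A k"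
    unfolding set_sum_def by blast
  have "y = (\<Sum>k\<in>I. h (f k))"
    using y by (simp add: additive.sum [OF assms])
  with f show "y \<in> set_sum (\<lambda>k. h ` A k) I"
    unfolding set_sum_def by blast
qed

lemma set_sum_Times_subset:
  "set_sum A I \<times> set_sum B I \<subseteq> set_sum (\<lambda>k. A k \<times> B k) I"
proof clarify
  fix x y assume "x \<in> set_sum A I" "y \<in> set_sum B I"
  then obtain f g where x: "x = (\<Sum>k\<in>I. f k)" and f: "\<forall>k\<in>I. f k \<in> A k"
    and y: "y = (\<Sum>k\<in>I. g k)" and g: "\<forall>k\<in>I. g k \<in> B k"
    unfolding set_sum_def by blast
  have "(x, y) = (\<Sum>k\<in>I. (f k, g k))"
    by (simp add: x y fst_sum snd_sum prod_eq_iff)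
  moreover have "\<forall>k\<in>I. (f k, g k) \<in> A k \<times> B k"
    using f g by simp
  ultimately show "(x, y) \<in> set_sum (\<lambda>k. A k \<times> B k) I"
    unfolding set_sum_def by blast
qed

lemma set_sum_mono_index:
  assumes "finite J" and "I \<subseteq> J" and "\<And>k. k \<in> J \<Longrightarrow> 0 \<in> A k"
  shows "set_sum A I \<subseteq> set_sum A J"
proof
  fix x assume "x \<in> set_sum A I"
  then obtain f where x: "x = (\<Sum>k\<in>I. f k)" and f: "\<forall>k\<in>I. f k \<in> A k"
    unfolding set_sum_def by blast
  define g where "g k = (if k \<in> I then f k else 0)" for k
  have "(\<Sum>k\<in>J. g k) = (\<Sum>k\<in>I. g k)"
    using assms by (intro sum.mono_neutral_right) (auto simp: g_def)
  also have "\<dots> = x"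
    using x by (simp add: g_def)
  finally have "x = (\<Sum>k\<in>J. g k)" ..
  moreover have "\<forall>k\<in>J. g k \<in> A k"
    using f assms by (auto simp: g_def)
  ultimately show "x \<in> set_sum A J"
    unfolding set_sum_def by blast
qed

definition expansive_along :: "('i \<Rightarrow> 'a::ab_group_add \<Rightarrow> 'a) \<Rightarrow> (nat \<Rightarrow> 'i set) \<Rightarrow> bool" where
  "expansive_along P I \<longleftrightarrow> (\<exists>S. finite_subgroup S \<and>
     (\<forall>F. finite_subgroup F \<longrightarrow> (\<exists>n. F \<subseteq> set_sum (\<lambda>k. P k ` S) (I n))))"

lemma pos_expansive_iff_expansive_along:
  "pos_expansive f \<longleftrightarrow> expansive_along (\<lambda>k. f ^^ k) (\<lambda>n. {0..n})"
  unfolding pos_expansive_def expansive_along_def ..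

lemma expansive_iff_expansive_along:
  "expansive f \<longleftrightarrow> expansive_along (zpow f) (\<lambda>n. {- int n..int n})"
  unfolding expansive_def expansive_along_def ..

lemma expansive_along_retract:
  fixes P :: "'i \<Rightarrow> 'a::ab_group_add \<Rightarrow> 'a" and Q :: "'i \<Rightarrow> 'b::ab_group_add \<Rightarrow> 'b"
    and h :: "'a \<Rightarrow> 'b" and e :: "'b \<Rightarrow> 'a"
  assumes "expansive_along P I"
    and h: "additive h" and e: "additive e" and h_e: "\<And>y. h (e y) = y"
    and h_P: "\<And>k x. h (P k x) = Q k (h x)"
  shows "expansive_along Q I"
proof -
  obtain S where S: "finite_subgroup S"
    and cover: "\<And>F. finite_subgroup F \<Longrightarrow> \<exists>n. F \<subseteq> set_sum (\<lambda>k. P k ` S) (I n)"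
    using assms(1) unfolding expansive_along_def by blast
  have "\<exists>n. F \<subseteq> set_sum (\<lambda>k. Q k ` h ` S) (I n)" if F: "finite_subgroup F" for F
  proof -
    obtain n where n: "e ` F \<subseteq> set_sum (\<lambda>k. P k ` S) (I n)"
      using cover [OF finite_subgroup_image [OF e F]] by blast
    have "F = h ` e ` F"
      by (simp add: image_image h_e)
    also have "\<dots> \<subseteq> h ` set_sum (\<lambda>k. P k ` S) (I n)"
      using n by (rule image_mono)
    also have "\<dots> \<subseteq> set_sum (\<lambda>k. h ` P k ` S) (I n)"
      using h by (rule image_set_sum_subset)
    also have "\<dots> = set_sum (\<lambda>k. Q k ` h ` S) (I n)"
      by (simp add: image_image h_P)
    finally show ?thesis by blast
  qed
  with finite_subgroup_image [OF h S] show ?thesis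
    unfolding expansive_along_def by blast
qed

lemma expansive_along_map_prod:
  fixes P :: "'i \<Rightarrow> 'a::ab_group_add \<Rightarrow> 'a" and Q :: "'i \<Rightarrow> 'b::ab_group_add \<Rightarrow> 'b"
  assumes "expansive_along P I" and "expansive_along Q I"
    and finite: "\<And>n. finite (I n)" and mono: "\<And>n m. n \<le> m \<Longrightarrow> I n \<subseteq> I m"
    and P_0: "\<And>k. P k 0 = 0" and Q_0: "\<And>k. Q k 0 = 0"
  shows "expansive_along (\<lambda>k. map_prod (P k) (Q k)) I"
proof -
  obtain S\<^sub>1 where S\<^sub>1: "finite_subgroup S\<^sub>1"
    and cover\<^sub>1: "\<And>F. finite_subgroup F \<Longrightarrow> \<exists>n. F \<subseteq> set_sum (\<lambda>k. P k ` S\<^sub>1) (I n)"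
    using assms(1) unfolding expansive_along_def by blast
  obtain S\<^sub>2 where S\<^sub>2: "finite_subgroup S\<^sub>2"
    and cover\<^sub>2: "\<And>F. finite_subgroup F \<Longrightarrow> \<exists>n. F \<subseteq> set_sum (\<lambda>k. Q k ` S\<^sub>2) (I n)"
    using assms(2) unfolding expansive_along_def by blast
  have "\<exists>n. F \<subseteq> set_sum (\<lambda>k. map_prod (P k) (Q k) ` (S\<^sub>1 \<times> S\<^sub>2)) (I n)"
    if F: "finite_subgroup F" for F
  proof -
    obtain n\<^sub>1 where n\<^sub>1: "fst ` F \<subseteq> set_sum (\<lambda>k. P k ` S\<^sub>1) (I n\<^sub>1)"
      using cover\<^sub>1 [OF finite_subgroup_image [OF additive_fst F]] by blast
    obtain n\<^sub>2 where n\<^sub>2: "snd ` F \<subseteq> set_sum (\<lambda>k. Q k ` S\<^sub>2) (I n\<^sub>2)"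
      using cover\<^sub>2 [OF finite_subgroup_image [OF additive_snd F]] by blast
    define n where "n = max n\<^sub>1 n\<^sub>2"
    have "0 \<in> P k ` S\<^sub>1" "0 \<in> Q k ` S\<^sub>2" for k
      using S\<^sub>1 S\<^sub>2 P_0 Q_0 unfolding finite_subgroup_def by (metis image_eqI)+
    then have grow\<^sub>1: "set_sum (\<lambda>k. P k ` S\<^sub>1) (I n\<^sub>1) \<subseteq> set_sum (\<lambda>k. P k ` S\<^sub>1) (I n)"
      and grow\<^sub>2: "set_sum (\<lambda>k. Q k ` S\<^sub>2) (I n\<^sub>2) \<subseteq> set_sum (\<lambda>k. Q k ` S\<^sub>2) (I n)"
      by (simp_all add: set_sum_mono_index finite mono n_def)
    have "F \<subseteq> fst ` F \<times> snd ` F"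
      by force
    also have "\<dots> \<subseteq> set_sum (\<lambda>k. P k ` S\<^sub>1) (I n) \<times> set_sum (\<lambda>k. Q k ` S\<^sub>2) (I n)"
      using n\<^sub>1 n\<^sub>2 grow\<^sub>1 grow\<^sub>2 by blast
    also have "\<dots> \<subseteq> set_sum (\<lambda>k. P k ` S\<^sub>1 \<times> Q k ` S\<^sub>2) (I n)"
      by (rule set_sum_Times_subset)
    also have "\<dots> = set_sum (\<lambda>k. map_prod (P k) (Q k) ` (S\<^sub>1 \<times> S\<^sub>2)) (I n)"
      by (simp add: map_prod_surj_on)
    finally show ?thesis by blast
  qed
  with finite_subgroup_Times [OF S\<^sub>1 S\<^sub>2] show ?thesis
    unfolding expansive_along_def by blast
qed

lemma expansive_along_map_prod_iff:
  fixes P :: "'i \<Rightarrow> 'a::ab_group_add \<Rightarrow> 'a" and Q :: "'i \<Rightarrow> 'b::ab_group_add \<Rightarrow> 'b"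
  assumes "\<And>n. finite (I n)" and "\<And>n m. n \<le> m \<Longrightarrow> I n \<subseteq> I m"
    and "\<And>k. P k 0 = 0" and "\<And>k. Q k 0 = 0"
  shows "expansive_along (\<lambda>k. map_prod (P k) (Q k)) I \<longleftrightarrow> expansive_along P I \<and> expansive_along Q I"
proof safe
  assume prod: "expansive_along (\<lambda>k. map_prod (P k) (Q k)) I"
  show "expansive_along P I"
    using prod additive_fst additive_Pair_left by (rule expansive_along_retract) simp_all
  show "expansive_along Q I"
    using prod additive_snd additive_Pair_right by (rule expansive_along_retract) simp_all
next
  assume "expansive_along P I" "expansive_along Q I"
  then show "expansive_along (\<lambda>k. map_prod (P k) (Q k)) I"
    using assms by (rule expansive_along_map_prod)
qed

lemma funpow_map_prod:
  fixes f :: "'a \<Rightarrow> 'a" and g :: "'b \<Rightarrow> 'b"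
  shows "map_prod f g ^^ k = map_prod (f ^^ k) (g ^^ k)"
  by (induction k) (auto simp: map_prod.id)

lemma inv_map_prod:
  assumes "bij f" and "bij g"
  shows "inv (map_prod f g) = map_prod (inv f) (inv g)"
  using assms by (intro inv_equality) (auto simp: bij_def surj_f_inv_f inv_f_f)

lemma zpow_map_prod:
  assumes "bij f" and "bij g"
  shows "zpow (map_prod f g) k = map_prod (zpow f k) (zpow g k)"
  using assms by (simp add: zpow_def inv_map_prod funpow_map_prod)

lemma funpow_fixed_point: "f x = x \<Longrightarrow> (f ^^ k) x = x"
  by (induction k) simp_all

lemma zpow_fixed_point:
  assumes "bij f" and "f x = x"
  shows "zpow f k x = x"
proof -
  have "inv f x = x"
    using assms by (simp add: bij_is_inj inv_f_eq)
  with assms show ?thesis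
    by (simp add: zpow_def funpow_fixed_point)
qed

lemma endomorphism_zero: "endomorphism f \<Longrightarrow> f 0 = 0"
  unfolding endomorphism_def by (metis additive.intro additive.zero)

theorem proposition2p7:
  fixes \<phi> :: "'a::ab_group_add \<Rightarrow> 'a" and \<psi> :: "'b::ab_group_add \<Rightarrow> 'b"
  assumes "endomorphism \<phi>" and "endomorphism \<psi>"
  shows "(pos_expansive (map_prod \<phi> \<psi>) \<longleftrightarrow> pos_expansive \<phi> \<and> pos_expansive \<psi>)
     \<and> (automorphism \<phi> \<and> automorphism \<psi> \<longrightarrow>
          (expansive (map_prod \<phi> \<psi>) \<longleftrightarrow> expansive \<phi> \<and> expansive \<psi>))"
proof (intro conjI impI)
  have zero: "\<phi> 0 = 0" "\<psi> 0 = 0"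
    using assms by (simp_all add: endomorphism_zero)
  show "pos_expansive (map_prod \<phi> \<psi>) \<longleftrightarrow> pos_expansive \<phi> \<and> pos_expansive \<psi>"
    unfolding pos_expansive_iff_expansive_along funpow_map_prod
    by (rule expansive_along_map_prod_iff) (simp_all add: funpow_fixed_point zero)
  assume "automorphism \<phi> \<and> automorphism \<psi>"
  then have bij: "bij \<phi>" "bij \<psi>"
    by (simp_all add: automorphism_def)
  show "expansive (map_prod \<phi> \<psi>) \<longleftrightarrow> expansive \<phi> \<and> expansive \<psi>"
    unfolding expansive_iff_expansive_along zpow_map_prod [OF bij, abs_def]
    by (rule expansive_along_map_prod_iff) (simp_all add: zpow_fixed_point zero bij)
qed

end
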